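(* Let $\Omega$ be a metrizable separable space, $\mathcal{L}\subset\mathcal{C}_b(\Omega)$ a linear subspace which is a vector lattice, contains the constants and generates the topology, and let $\rho$ be a normalized uniformly regular convex risk measure on $\mathcal{L}$. Let $\rho_1$ be a regular sublinear risk measure on $\mathcal{L}$ with $\rho\le\rho_1$. Then: (i) $c(X)=\rho_1(-|X|)$ defines a capacity on $\mathcal{L}$; (ii) $\rho_1$ has a unique continuous extension to a sublinear risk measure $\overline{\rho_1}$ on $L^1(c)$; (iii) $\rho$ has a unique continuous extension to a normalized convex risk measure $\overline{\rho}$ on $L^1(c)$, majorized by $\overline{\rho_1}$.
   Context: A convex risk measure on $\mathcal{L}$ (resp. on $L^1(c)$) is a map $\rho$ to $\mathbb{R}$ that is monotone ($X\le Y\Rightarrow\rho(X)\ge\rho(Y)$), convex and translation invariant ($\rho(X+a)=\rho(X)-a$, $a\in\mathbb{R}$); normalized means $\rho(0)=0$; sublinear means additionally positively homogeneous. A sublinear risk measure $\rho_1$ on $\mathcal{L}$ is regular if $\rho_1(-X_n)\to0$ for every sequence $X_n\in\mathcal{L}$ decreasing pointwise to $0$. A normalized convex risk measure $\rho$ on $\mathcal{L}$ is uniformly regular if $\sup_{\lambda>0}\rho(\lambda X)/\lambda<\infty$ for all $X$, and for every sequence $X_n\in\mathcal{L}$ decreasing to $0$, $\rho(-\lambda X_n)/\lambda\to0$ uniformly in $\lambda>0$. A capacity on $\mathcal{L}$ is a seminorm $c$ with $c(f)\le c(g)$ whenever $|f|\le|g|$ and $\inf_n c(f_n)=0$ for $f_n\in\mathcal{L}$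 decreasing to $0$; extended to all functions by $c(f)=\sup\{c(\varphi):\varphi\in\mathcal{L},0\le\varphi\le f\}$ for $f\ge0$ l.s.c. and $c(g)=\inf\{c(f):f\text{ l.s.c.},f\ge|g|\}$. $L^1(c)$ is the Banach space obtained as the quotient by $c$-null elements of the $c$-closure of $\mathcal{L}$ in $\{g:c(g)<\infty\}$, ordered by: $X\ge0$ iff some $f_n\in\mathcal{L}$, $f_n\ge0$, satisfy $c(g-f_n)\to0$ for every representative $g$ of $X$. *)

theory Defs
  imports "HOL-Analysis.Analysis"
begin

definition bounded_cont :: "('a::topological_space \<Rightarrow> real) \<Rightarrow> bool" where
  "bounded_cont f \<longleftrightarrow> continuous_on UNIV f \<and> bounded (range f)"

definition decr_to_zero :: "(nat \<Rightarrow> 'a \<Rightarrow> real) \<Rightarrow> bool" where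
  "decr_to_zero Xs \<longleftrightarrow> (\<forall>n x. Xs (Suc n) x \<le> Xs n x) \<and> (\<forall>x. (\<lambda>n. Xs n x) \<longlonglongrightarrow> 0)"

definition const_fun :: "real \<Rightarrow> 'a \<Rightarrow> real" where
  "const_fun a = (\<lambda>x. a)"

text \<open>Risk measures on a set D of functions (D = L or D = the carrier of L^1(c)),
with respect to an order given by a nonnegativity predicate.\<close>

definition monotone_rm :: "('a \<Rightarrow> real) set \<Rightarrow> (('a \<Rightarrow> real) \<Rightarrow> bool) \<Rightarrow> (('a \<Rightarrow> real) \<Rightarrow> real) \<Rightarrow> bool" where
  "monotone_rm D nonneg \<rho> \<longleftrightarrow> (\<forall>X\<in>D. \<forall>Y\<in>D. nonneg (\<lambda>x. Y x - X x) \<longrightarrow> \<rho> X \<ge> \<rho> Y)"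

definition convex_rm :: "('a \<Rightarrow> real) set \<Rightarrow> (('a \<Rightarrow> real) \<Rightarrow> real) \<Rightarrow> bool" where
  "convex_rm D \<rho> \<longleftrightarrow> (\<forall>X\<in>D. \<forall>Y\<in>D. \<forall>t::real. 0 \<le> t \<and> t \<le> 1 \<longrightarrow>
      \<rho> (\<lambda>x. t * X x + (1 - t) * Y x) \<le> t * \<rho> X + (1 - t) * \<rho> Y)"

definition transl_inv :: "('a \<Rightarrow> real) set \<Rightarrow> (('a \<Rightarrow> real) \<Rightarrow> real) \<Rightarrow> bool" where
  "transl_inv D \<rho> \<longleftrightarrow> (\<forall>X\<in>D. \<forall>a::real. \<rho> (\<lambda>x. X x + a) = \<rho> X - a)"

definition pos_homogeneous :: "('a \<Rightarrow> real) set \<Rightarrow> (('a \<Rightarrow> real) \<Rightarrow> real) \<Rightarrow> bool" where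
  "pos_homogeneous D \<rho> \<longleftrightarrow> (\<forall>X\<in>D. \<forall>t::real. t > 0 \<longrightarrow> \<rho> (\<lambda>x. t * X x) = t * \<rho> X)"

definition convex_risk_measure ::
  "('a \<Rightarrow> real) set \<Rightarrow> (('a \<Rightarrow> real) \<Rightarrow> bool) \<Rightarrow> (('a \<Rightarrow> real) \<Rightarrow> real) \<Rightarrow> bool" where
  "convex_risk_measure D nonneg \<rho> \<longleftrightarrow> monotone_rm D nonneg \<rho> \<and> convex_rm D \<rho> \<and> transl_inv D \<rho>"

definition sublinear_risk_measure ::
  "('a \<Rightarrow> real) set \<Rightarrow> (('a \<Rightarrow> real) \<Rightarrow> bool) \<Rightarrow> (('a \<Rightarrow> real) \<Rightarrow> real) \<Rightarrow> bool" where
  "sublinear_risk_measure D nonneg \<rho> \<longleftrightarrow> convex_risk_measure D nonneg \<rho> \<and> pos_homogeneous D \<rho>"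

definition pw_nonneg :: "('a \<Rightarrow> real) \<Rightarrow> bool" where
  "pw_nonneg X \<longleftrightarrow> (\<forall>x. 0 \<le> X x)"

definition regular_rm :: "('a \<Rightarrow> real) set \<Rightarrow> (('a \<Rightarrow> real) \<Rightarrow> real) \<Rightarrow> bool" where
  "regular_rm L \<rho> \<longleftrightarrow> (\<forall>Xs. (\<forall>n. Xs n \<in> L) \<and> decr_to_zero Xs \<longrightarrow>
       (\<lambda>n. \<rho> (\<lambda>x. - Xs n x)) \<longlonglongrightarrow> 0)"

definition uniformly_regular :: "('a \<Rightarrow> real) set \<Rightarrow> (('a \<Rightarrow> real) \<Rightarrow> real) \<Rightarrow> bool" where
  "uniformly_regular L \<rho> \<longleftrightarrow>
     (\<forall>X\<in>L. \<exists>B::real. \<forall>t::real. t > 0 \<longrightarrow> \<rho> (\<lambda>x. t * X x) / t \<le> B) \<and>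
     (\<forall>Xs. (\<forall>n. Xs n \<in> L) \<and> decr_to_zero Xs \<longrightarrow>
        (\<forall>e>0. \<exists>N. \<forall>n\<ge>N. \<forall>t::real. t > 0 \<longrightarrow> \<bar>\<rho> (\<lambda>x. - t * Xs n x) / t\<bar> < e))"

definition capacity :: "('a \<Rightarrow> real) set \<Rightarrow> (('a \<Rightarrow> real) \<Rightarrow> real) \<Rightarrow> bool" where
  "capacity L c \<longleftrightarrow>
     (\<forall>f\<in>L. \<forall>g\<in>L. c (\<lambda>x. f x + g x) \<le> c f + c g) \<and>
     (\<forall>f\<in>L. \<forall>a::real. c (\<lambda>x. a * f x) = \<bar>a\<bar> * c f) \<and>
     (\<forall>f\<in>L. \<forall>g\<in>L. (\<forall>x. \<bar>f x\<bar> \<le> \<bar>g x\<bar>) \<longrightarrow> c f \<le> c g) \<and>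
     (\<forall>fs. (\<forall>n. fs n \<in> L) \<and> decr_to_zero fs \<longrightarrow> (INF n. c (fs n)) = 0)"

definition lsc :: "('a::topological_space \<Rightarrow> real) \<Rightarrow> bool" where
  "lsc f \<longleftrightarrow> (\<forall>t. open {x. t < f x})"

text \<open>Extension of c: first to nonnegative l.s.c. functions, then to all functions.\<close>
definition cap_lsc :: "('a \<Rightarrow> real) set \<Rightarrow> (('a \<Rightarrow> real) \<Rightarrow> real) \<Rightarrow> ('a \<Rightarrow> real) \<Rightarrow> ereal" where
  "cap_lsc L c f = (SUP \<phi>\<in>{\<phi>\<in>L. \<forall>x. 0 \<le> \<phi> x \<and> \<phi> x \<le> f x}. ereal (c \<phi>))"

definition cap_ext :: "('a::topological_space \<Rightarrow> real) set \<Rightarrow> (('a \<Rightarrow> real) \<Rightarrow> real) \<Rightarrow> ('a \<Rightarrow> real) \<Rightarrow> ereal" where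
  "cap_ext L c g = (INF f\<in>{f. lsc f \<and> (\<forall>x. \<bar>g x\<bar> \<le> f x)}. cap_lsc L c f)"

text \<open>Carrier of L^1(c) (before passing to the quotient by c-null functions):
the c-closure of L inside {g. c g < \<infinity>}.\<close>
definition L1_carrier :: "('a::topological_space \<Rightarrow> real) set \<Rightarrow> (('a \<Rightarrow> real) \<Rightarrow> real) \<Rightarrow> ('a \<Rightarrow> real) set" where
  "L1_carrier L c = {g. cap_ext L c g < \<infinity> \<and> (\<forall>e>0. \<exists>f\<in>L. cap_ext L c (\<lambda>x. g x - f x) < ereal e)}"

text \<open>Order on L^1(c): X \<ge> 0 iff there are nonnegative f_n in L with c(g - f_n) \<rightarrow> 0
(for a, equivalently every, representative g).\<close>
definition L1_nonneg :: "('a::topological_space \<Rightarrow> real) set \<Rightarrow> (('a \<Rightarrow> real) \<Rightarrow> real) \<Rightarrow> ('a \<Rightarrow> real) \<Rightarrow> bool" where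
  "L1_nonneg L c g \<longleftrightarrow> (\<exists>fs. (\<forall>n. fs n \<in> L \<and> pw_nonneg (fs n)) \<and>
        (\<lambda>n. cap_ext L c (\<lambda>x. g x - fs n x)) \<longlonglongrightarrow> 0)"

definition L1_continuous :: "('a::topological_space \<Rightarrow> real) set \<Rightarrow> (('a \<Rightarrow> real) \<Rightarrow> real) \<Rightarrow> (('a \<Rightarrow> real) \<Rightarrow> real) \<Rightarrow> bool" where
  "L1_continuous L c R \<longleftrightarrow> (\<forall>g\<in>L1_carrier L c. \<forall>e>0. \<exists>d>0. \<forall>h\<in>L1_carrier L c.
       cap_ext L c (\<lambda>x. h x - g x) < ereal d \<longrightarrow> \<bar>R h - R g\<bar> < e)"

end

theory Submission
  imports Defs
begin

text \<open>Being dominated by the sublinear \<open>\<rho>1\<close>, the convex \<open>\<rho>\<close> is, like \<open>\<rho>1\<close> itself,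
  1-Lipschitz for the seminorm \<open>c\<close> on \<open>L\<close> (by convexity along the ray through \<open>Y\<close>).
  Both therefore extend uniquely by continuity to the \<open>c\<close>-closure of \<open>L\<close>, and the identities
  and inequalities defining risk measures pass to the limit. The one topological input is
  that the extension of \<open>c\<close> to lower semicontinuous functions stays subadditive: a
  nonnegative l.s.c. function is the increasing pointwise limit of functions in \<open>L\<close>
  (bump functions from the generating lattice, countably many thanks to a countable base
  of the separable metrizable space), and regularity of \<open>\<rho>1\<close> makes the error vanish.\<close>

lemma eq_if_abs_diff_le_epsilon:
  fixes a b :: real
  assumes "\<And>e. e > 0 \<Longrightarrow> \<bar>a - b\<bar> \<le> e"
  shows "a = b"
proof -
  have "\<bar>a - b\<bar> \<le> 0 + e" if "e > 0" for e
    using assms that by simp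
  then have "\<bar>a - b\<bar> \<le> 0"
    by (rule field_le_epsilon)
  then show ?thesis
    by simp
qed

lemma metrizable_separable_imp_second_countable:
  assumes "metrizable_space X" and "separable_space X"
  shows "second_countable X"
proof -
  obtain M d where "Metric_space M d" and X: "X = Metric_space.mtopology M d"
    using assms(1) unfolding metrizable_space_def by blast
  interpret Metric_space M d by fact
  obtain C where C: "countable C" and dense: "mtopology closure_of C = M"
    using assms(2) unfolding separable_space_def X by auto
  define \<B> where "\<B> = (\<lambda>(y, q). mball y q) ` (C \<times> {q \<in> \<rat>. q > 0})"
  have countable: "countable \<B>"
    unfolding \<B>_def using C countable_rat
    by (intro countable_image countable_SIGMA) (auto intro: countable_subset[of _ \<rat>])
  have base: "\<exists>V\<in>\<B>. x \<in> V \<and> V \<subseteq> U" if U: "openin mtopology U" "x \<in> U" for U x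
  proof -
    obtain r where r: "r > 0" "mball x r \<subseteq> U"
      using U openin_mtopology by blast
    obtain q where q: "q \<in> \<rat>" "0 < q" "q < r / 2"
      using Rats_dense_in_real[of 0 "r / 2"] r by auto
    have "x \<in> M"
      using U openin_mtopology by blast
    then have "x \<in> mtopology closure_of C"
      using dense by simp
    then obtain y where y: "y \<in> C" "y \<in> mball x q"
      using q unfolding metric_closure_of by blast
    have "mball y q \<subseteq> mball x r"
      using y q by (intro mball_subset) (auto simp: commute)
    moreover have "x \<in> mball y q"
      using y by (auto simp: commute)
    moreover have "mball y q \<in> \<B>"
      unfolding \<B>_def using y q by auto
    ultimately show ?thesis
      using r by blast
  qed
  have "\<forall>V\<in>\<B>. openin mtopology V"
    unfolding \<B>_def by auto
  then show ?thesis
    unfolding second_countable_def X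
    using countable base by blast
qed

lemma monotone_rm_pointwise:
  assumes "monotone_rm L pw_nonneg r" "X \<in> L" "Y \<in> L" "\<And>x. X x \<le> Y x"
  shows "r Y \<le> r X"
  using assms unfolding monotone_rm_def pw_nonneg_def by auto

lemma convex_rmD:
  assumes "convex_rm L r" "X \<in> L" "Y \<in> L" "0 \<le> t" "t \<le> 1"
  shows "r (\<lambda>x. t * X x + (1 - t) * Y x) \<le> t * r X + (1 - t) * r Y"
  using assms unfolding convex_rm_def by blast

lemma pos_homogeneousD:
  assumes "pos_homogeneous L r" "X \<in> L" "t > 0"
  shows "r (\<lambda>x. t * X x) = t * r X"
  using assms unfolding pos_homogeneous_def by blast

lemma sublinear_rm_zero:
  assumes "sublinear_risk_measure L nonneg r" "(\<lambda>x. 0) \<in> L"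
  shows "r (\<lambda>x. 0) = 0"
proof -
  have "pos_homogeneous L r"
    using assms(1) unfolding sublinear_risk_measure_def by blast
  from pos_homogeneousD[OF this assms(2), of 2] show ?thesis
    by simp
qed

primrec running_max :: "(nat \<Rightarrow> 'a \<Rightarrow> real) \<Rightarrow> nat \<Rightarrow> 'a \<Rightarrow> real" where
  "running_max e 0 = e 0"
| "running_max e (Suc n) = (\<lambda>y. max (running_max e n y) (e (Suc n) y))"

lemma running_max_ge: "k \<le> n \<Longrightarrow> e k y \<le> running_max e n y"
proof (induction n)
  case 0
  then show ?case by simp
next
  case (Suc n)
  then show ?case by (cases "k = Suc n") auto
qed

lemma running_max_closed:
  assumes "\<And>k. e k \<in> S" and "\<And>f g. f \<in> S \<Longrightarrow> g \<in> S \<Longrightarrow> (\<lambda>y. max (f y) (g y)) \<in> S"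
  shows "running_max e n \<in> S"
  using assms by (induction n) auto

section \<open>Lattices of functions and risk measures\<close>

locale function_lattice =
  fixes L :: "('a \<Rightarrow> real) set"
  assumes add_closed: "f \<in> L \<Longrightarrow> g \<in> L \<Longrightarrow> (\<lambda>x. f x + g x) \<in> L"
    and scale_closed: "f \<in> L \<Longrightarrow> (\<lambda>x. a * f x) \<in> L"
    and max_closed: "f \<in> L \<Longrightarrow> g \<in> L \<Longrightarrow> (\<lambda>x. max (f x) (g x)) \<in> L"
    and const_closed: "(\<lambda>x. a) \<in> L"
begin

lemma uminus_closed: "f \<in> L \<Longrightarrow> (\<lambda>x. - f x) \<in> L"
  using scale_closed[of f "-1"] by simp

lemma diff_closed: "f \<in> L \<Longrightarrow> g \<in> L \<Longrightarrow> (\<lambda>x. f x - g x) \<in> L"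
  using add_closed[of f "\<lambda>x. - g x"] uminus_closed[of g] by simp

lemma add_const_closed: "f \<in> L \<Longrightarrow> (\<lambda>x. f x + a) \<in> L"
  using add_closed const_closed by blast

lemma abs_closed: "f \<in> L \<Longrightarrow> (\<lambda>x. \<bar>f x\<bar>) \<in> L"
proof -
  have "(\<lambda>x. max (f x) (- f x)) = (\<lambda>x. \<bar>f x\<bar>)"
    by (auto simp: fun_eq_iff)
  then show "f \<in> L \<Longrightarrow> (\<lambda>x. \<bar>f x\<bar>) \<in> L"
    using max_closed[of f "\<lambda>x. - f x"] uminus_closed[of f] by simp
qed

lemma neg_abs_closed: "f \<in> L \<Longrightarrow> (\<lambda>x. - \<bar>f x\<bar>) \<in> L"
  using uminus_closed abs_closed by blast

lemma min_closed: "f \<in> L \<Longrightarrow> g \<in> L \<Longrightarrow> (\<lambda>x. min (f x) (g x)) \<in> L"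
proof -
  have "(\<lambda>x. - max (- f x) (- g x)) = (\<lambda>x. min (f x) (g x))"
    by (auto simp: fun_eq_iff)
  then show "f \<in> L \<Longrightarrow> g \<in> L \<Longrightarrow> (\<lambda>x. min (f x) (g x)) \<in> L"
    using uminus_closed[OF max_closed[OF uminus_closed uminus_closed], of f g] by simp
qed

lemma sublinear_rm_subadditive:
  assumes "sublinear_risk_measure L nonneg r" "X \<in> L" "Y \<in> L"
  shows "r (\<lambda>x. X x + Y x) \<le> r X + r Y"
proof -
  have convex: "convex_rm L r" and homogeneous: "pos_homogeneous L r"
    using assms(1) unfolding sublinear_risk_measure_def convex_risk_measure_def by auto
  have "r (\<lambda>x. X x + Y x) = r (\<lambda>x. (1/2) * (2 * X x) + (1 - 1/2) * (2 * Y x))"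
    by simp
  also have "\<dots> \<le> (1/2) * r (\<lambda>x. 2 * X x) + (1 - 1/2) * r (\<lambda>x. 2 * Y x)"
    using convex_rmD[OF convex scale_closed[OF assms(2), of 2] scale_closed[OF assms(3), of 2], of "1/2"] by simp
  also have "\<dots> = r X + r Y"
    using pos_homogeneousD[OF homogeneous] assms(2,3) by simp
  finally show ?thesis .
qed

lemma convex_rm_along_ray:
  assumes "convex_rm L r" "Y \<in> L"
  shows "convex_on UNIV (\<lambda>s. r (\<lambda>x. s * Y x))"
proof (rule convex_onI)
  fix t s1 s2 :: real
  assume t: "0 < t" "t < 1"
  have "r (\<lambda>x. (1 - t) * (s1 * Y x) + (1 - (1 - t)) * (s2 * Y x))
      \<le> (1 - t) * r (\<lambda>x. s1 * Y x) + (1 - (1 - t)) * r (\<lambda>x. s2 * Y x)"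
    using convex_rmD[OF assms(1) scale_closed[OF assms(2), of s1] scale_closed[OF assms(2), of s2], of "1 - t"] t
    by simp
  moreover have "(\<lambda>x. (1 - t) * (s1 * Y x) + (1 - (1 - t)) * (s2 * Y x))
      = (\<lambda>x. ((1 - t) *\<^sub>R s1 + t *\<^sub>R s2) * Y x)"
    by (auto simp: fun_eq_iff algebra_simps)
  ultimately show "r (\<lambda>x. ((1 - t) *\<^sub>R s1 + t *\<^sub>R s2) * Y x)
      \<le> (1 - t) * r (\<lambda>x. s1 * Y x) + t * r (\<lambda>x. s2 * Y x)"
    by simp
qed simp

end

section \<open>The capacity induced by a regular sublinear risk measure\<close>

locale sublinear_capacity = function_lattice L
  for L :: "('a \<Rightarrow> real) set" +
  fixes \<rho>1 c :: "('a \<Rightarrow> real) \<Rightarrow> real"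
  assumes sublinear: "sublinear_risk_measure L pw_nonneg \<rho>1"
    and regular: "regular_rm L \<rho>1"
    and c_eq: "c X = \<rho>1 (\<lambda>x. - \<bar>X x\<bar>)"
begin

lemma \<rho>1_antimono: "X \<in> L \<Longrightarrow> Y \<in> L \<Longrightarrow> (\<And>x. X x \<le> Y x) \<Longrightarrow> \<rho>1 Y \<le> \<rho>1 X"
  using sublinear monotone_rm_pointwise
  unfolding sublinear_risk_measure_def convex_risk_measure_def by blast

lemma \<rho>1_homogeneous: "X \<in> L \<Longrightarrow> t > 0 \<Longrightarrow> \<rho>1 (\<lambda>x. t * X x) = t * \<rho>1 X"
  using sublinear pos_homogeneousD unfolding sublinear_risk_measure_def by blast

lemma \<rho>1_subadditive: "X \<in> L \<Longrightarrow> Y \<in> L \<Longrightarrow> \<rho>1 (\<lambda>x. X x + Y x) \<le> \<rho>1 X + \<rho>1 Y"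
  using sublinear by (rule sublinear_rm_subadditive)

lemma c_zero: "c (\<lambda>x. 0) = 0"
  using sublinear_rm_zero[OF sublinear const_closed] by (simp add: c_eq)

lemma c_nonneg: "f \<in> L \<Longrightarrow> 0 \<le> c f"
  using \<rho>1_antimono[of "\<lambda>x. - \<bar>f x\<bar>" "\<lambda>x. 0"] c_zero
  by (simp add: c_eq abs_closed uminus_closed const_closed)

lemma c_mono: "f \<in> L \<Longrightarrow> g \<in> L \<Longrightarrow> (\<And>x. \<bar>f x\<bar> \<le> \<bar>g x\<bar>) \<Longrightarrow> c f \<le> c g"
  unfolding c_eq by (rule \<rho>1_antimono) (auto intro: neg_abs_closed)

lemma c_abs: "c (\<lambda>x. \<bar>f x\<bar>) = c f"
  by (simp add: c_eq)

lemma c_diff_commute: "c (\<lambda>x. f x - g x) = c (\<lambda>x. g x - f x)"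
  by (simp add: c_eq abs_minus_commute)

lemma c_subadditive:
  assumes "f \<in> L" "g \<in> L"
  shows "c (\<lambda>x. f x + g x) \<le> c f + c g"
proof -
  have "c (\<lambda>x. f x + g x) \<le> \<rho>1 (\<lambda>x. (- \<bar>f x\<bar>) + (- \<bar>g x\<bar>))"
    unfolding c_eq using assms
    by (intro \<rho>1_antimono add_closed neg_abs_closed) (auto intro: abs_triangle_ineq)
  also have "\<dots> \<le> c f + c g"
    unfolding c_eq using assms by (intro \<rho>1_subadditive neg_abs_closed)
  finally show ?thesis .
qed

lemma c_scale:
  assumes "f \<in> L"
  shows "c (\<lambda>x. a * f x) = \<bar>a\<bar> * c f"
proof (cases "a = 0")
  case True
  then show ?thesis
    using c_zero by simp
next
  case False
  have "c (\<lambda>x. a * f x) = \<rho>1 (\<lambda>x. \<bar>a\<bar> * (- \<bar>f x\<bar>))"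
    by (simp add: c_eq abs_mult)
  also have "\<dots> = \<bar>a\<bar> * c f"
    unfolding c_eq using False assms by (intro \<rho>1_homogeneous) (auto intro: neg_abs_closed)
  finally show ?thesis .
qed

lemma \<rho>1_lipschitz:
  assumes "X \<in> L" "Y \<in> L"
  shows "\<bar>\<rho>1 X - \<rho>1 Y\<bar> \<le> c (\<lambda>x. X x - Y x)"
proof -
  have one_sided: "\<rho>1 X \<le> \<rho>1 Y + c (\<lambda>x. X x - Y x)" if "X \<in> L" "Y \<in> L" for X Y
  proof -
    have "\<rho>1 X = \<rho>1 (\<lambda>x. Y x + (X x - Y x))"
      by simp
    also have "\<dots> \<le> \<rho>1 Y + \<rho>1 (\<lambda>x. X x - Y x)"
      using that by (intro \<rho>1_subadditive diff_closed)
    also have "\<rho>1 (\<lambda>x. X x - Y x) \<le> c (\<lambda>x. X x - Y x)"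
      unfolding c_eq using that by (intro \<rho>1_antimono diff_closed neg_abs_closed) auto
    finally show ?thesis
      by simp
  qed
  have "\<rho>1 Y \<le> \<rho>1 X + c (\<lambda>x. X x - Y x)"
    using one_sided[OF assms(2,1)] c_diff_commute[of X Y] by simp
  with one_sided[OF assms] show ?thesis
    by linarith
qed

lemma c_INF_decreasing:
  assumes "\<And>n. fs n \<in> L" "decr_to_zero fs"
  shows "(INF n. c (fs n)) = 0"
proof -
  have "0 \<le> fs n x" for n x
    using assms(2) unfolding decr_to_zero_def
    by (intro decseq_ge[of "\<lambda>n. fs n x"]) (auto simp: decseq_Suc_iff)
  then have "c (fs n) = \<rho>1 (\<lambda>x. - fs n x)" for n
    by (simp add: c_eq)
  moreover have "(\<lambda>n. \<rho>1 (\<lambda>x. - fs n x)) \<longlonglongrightarrow> 0"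
    using regular assms unfolding regular_rm_def by blast
  ultimately have "(\<lambda>n. c (fs n)) \<longlonglongrightarrow> 0"
    by simp
  moreover have "bdd_below (range (\<lambda>n. c (fs n)))"
    using c_nonneg assms(1) by (intro bdd_belowI[of _ 0]) auto
  ultimately show ?thesis
    using c_nonneg assms(1)
    by (intro antisym cINF_greatest) (auto intro: LIMSEQ_le_const cINF_lower)
qed

lemma capacity_c: "capacity L c"
  unfolding capacity_def
  using c_subadditive c_scale c_mono c_INF_decreasing by blast

lemma convex_rm_lipschitz:
  assumes convex: "convex_rm L \<rho>" and dominated: "\<And>X. X \<in> L \<Longrightarrow> \<rho> X \<le> \<rho>1 X"
    and "X \<in> L" "Y \<in> L"
  shows "\<bar>\<rho> X - \<rho> Y\<bar> \<le> c (\<lambda>x. X x - Y x)"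
proof -
  have one_sided: "\<rho> X \<le> \<rho> Y + c (\<lambda>x. X x - Y x)" if X: "X \<in> L" and Y: "Y \<in> L" for X Y
  proof -
    define Z where "Z = (\<lambda>x. X x - Y x)"
    define \<phi> where "\<phi> s = \<rho> (\<lambda>x. s * Y x)" for s
    have Z: "Z \<in> L"
      unfolding Z_def using X Y by (rule diff_closed)
    \<comment> \<open>Split X as a convex combination of Y/t and Z/(1-t) and let t tend to 1.\<close>
    have bound: "\<rho> X \<le> t * \<phi> (1 / t) + c Z" if t: "0 < t" "t < 1" for t
    proof -
      have "\<rho> (\<lambda>x. (1 / (1 - t)) * Z x) \<le> \<rho>1 (\<lambda>x. (1 / (1 - t)) * Z x)"
        using dominated scale_closed[OF Z] by blast
      also have "\<dots> \<le> \<rho>1 (\<lambda>x. (1 / (1 - t)) * (- \<bar>Z x\<bar>))"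
        using t Z by (intro \<rho>1_antimono scale_closed abs_closed uminus_closed mult_left_mono) auto
      also have "\<dots> = c Z / (1 - t)"
        unfolding c_eq using t Z by (subst \<rho>1_homogeneous) (auto intro: neg_abs_closed)
      finally have Z_part: "(1 - t) * \<rho> (\<lambda>x. (1 / (1 - t)) * Z x) \<le> c Z"
        using t by (simp add: field_simps)
      have "\<rho> X = \<rho> (\<lambda>x. t * ((1 / t) * Y x) + (1 - t) * ((1 / (1 - t)) * Z x))"
        using t by (intro arg_cong[where f = \<rho>]) (auto simp: Z_def fun_eq_iff field_simps)
      also have "\<dots> \<le> t * \<phi> (1 / t) + (1 - t) * \<rho> (\<lambda>x. (1 / (1 - t)) * Z x)"
        unfolding \<phi>_def using t by (intro convex_rmD[OF convex] scale_closed Y Z) auto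
      finally show ?thesis
        using Z_part by linarith
    qed
    have "isCont \<phi> 1"
      using convex_on_continuous[OF open_UNIV convex_rm_along_ray[OF convex Y]]
      unfolding \<phi>_def by (simp add: continuous_on_eq_continuous_at)
    moreover have "((\<lambda>t. 1 / t) \<longlongrightarrow> 1) (at_left (1::real))"
      by (intro tendsto_eq_intros) auto
    ultimately have lim: "((\<lambda>t. t * \<phi> (1 / t) + c Z) \<longlongrightarrow> 1 * \<phi> 1 + c Z) (at_left 1)"
      by (intro tendsto_intros isCont_tendsto_compose[of 1 \<phi>]) auto
    have "eventually (\<lambda>t. t \<in> {0<..<1}) (at_left (1::real))"
      by (rule eventually_at_left_real) simp
    then have "eventually (\<lambda>t. \<rho> X \<le> t * \<phi> (1 / t) + c Z) (at_left 1)"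
      by eventually_elim (auto intro: bound)
    then have "\<rho> X \<le> 1 * \<phi> 1 + c Z"
      by (rule tendsto_lowerbound[OF lim]) simp
    then show ?thesis
      by (simp add: \<phi>_def Z_def)
  qed
  have "\<rho> Y \<le> \<rho> X + c (\<lambda>x. X x - Y x)"
    using one_sided[OF assms(4,3)] c_diff_commute[of X Y] by simp
  with one_sided[OF assms(3,4)] show ?thesis
    by linarith
qed

end

section \<open>Approximating lower semicontinuous functions from below\<close>

lemma lsc_add:
  assumes "lsc F" "lsc G"
  shows "lsc (\<lambda>x. F x + G x)"
  unfolding lsc_def
proof
  fix t
  have "{x. t < F x + G x} = (\<Union>r. {x. r < F x} \<inter> {x. t - r < G x})"
  proof (intro set_eqI iffI)
    fix x
    assume "x \<in> {x. t < F x + G x}"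
    then have "x \<in> {x. F x - (F x + G x - t) / 2 < F x} \<inter> {x. t - (F x - (F x + G x - t) / 2) < G x}"
      by (auto simp: field_simps)
    then show "x \<in> (\<Union>r. {x. r < F x} \<inter> {x. t - r < G x})"
      by blast
  qed auto
  moreover have "open (\<Union>r. {x. r < F x} \<inter> {x. t - r < G x})"
    using assms unfolding lsc_def by (intro open_UN open_Int) auto
  ultimately show "open {x. t < F x + G x}"
    by simp
qed

lemma lsc_scale:
  assumes "lsc F" "r > 0"
  shows "lsc (\<lambda>x. r * F x)"
  unfolding lsc_def
proof
  fix t
  have "{x. t < r * F x} = {x. t / r < F x}"
    using assms(2) by (auto simp: field_simps)
  then show "open {x. t < r * F x}"
    using assms(1) unfolding lsc_def by simp
qed

lemma lsc_abs_continuous: "continuous_on UNIV f \<Longrightarrow> lsc (\<lambda>x. \<bar>f x\<bar>)"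
  unfolding lsc_def by (auto intro!: open_Collect_less continuous_intros)

definition bump_function :: "('a \<Rightarrow> real) \<Rightarrow> 'a set \<Rightarrow> 'a \<Rightarrow> bool" where
  "bump_function \<psi> W x \<longleftrightarrow> (\<forall>y. 0 \<le> \<psi> y \<and> \<psi> y \<le> 1) \<and> \<psi> x = 1 \<and> (\<forall>y. y \<notin> W \<longrightarrow> \<psi> y = 0)"

context function_lattice
begin

definition minorants :: "('a \<Rightarrow> real) \<Rightarrow> ('a \<Rightarrow> real) set" where
  "minorants F = {\<psi> \<in> L. \<forall>y. 0 \<le> \<psi> y \<and> \<psi> y \<le> F y}"

lemma zero_in_minorants: "(\<And>y. 0 \<le> F y) \<Longrightarrow> (\<lambda>y. 0) \<in> minorants F"
  unfolding minorants_def using const_closed by simp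

lemma max_in_minorants:
  "\<psi> \<in> minorants F \<Longrightarrow> \<eta> \<in> minorants F \<Longrightarrow> (\<lambda>y. max (\<psi> y) (\<eta> y)) \<in> minorants F"
  unfolding minorants_def by (auto intro: max_closed simp: le_max_iff_disj)

lemma exists_bump_generated:
  assumes "generate_topology_on {f -` U | f U. f \<in> L \<and> open U} W" "x \<in> W"
  shows "\<exists>\<psi>\<in>L. bump_function \<psi> W x"
  using assms
proof (induction arbitrary: x rule: generate_topology_on.induct)
  case Empty
  then show ?case by simp
next
  case (Int V W)
  obtain \<psi> where "\<psi> \<in> L" "bump_function \<psi> V x"
    using Int.IH(1) Int.prems by blast
  moreover obtain \<eta> where "\<eta> \<in> L" "bump_function \<eta> W x"
    using Int.IH(2) Int.prems by blast
  ultimately show ?case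
    by (intro bexI[of _ "\<lambda>y. min (\<psi> y) (\<eta> y)"] min_closed)
       (auto simp: bump_function_def min_le_iff_disj)
next
  case (UN K)
  then obtain W where "W \<in> K" "x \<in> W"
    by blast
  with UN.IH obtain \<psi> where "\<psi> \<in> L" "bump_function \<psi> W x"
    by blast
  then show ?case
    using \<open>W \<in> K\<close> by (auto simp: bump_function_def)
next
  case (Basis S)
  then obtain f V where S: "S = f -` V" "f \<in> L" "open V"
    by blast
  then obtain e where e: "e > 0" "\<And>z. dist z (f x) < e \<Longrightarrow> z \<in> V"
    using Basis.prems unfolding open_dist by blast
  \<comment> \<open>A tent of height 1 around \<open>f x\<close>, vanishing where \<open>f\<close> is \<open>e\<close>-far from \<open>f x\<close>.\<close>
  define \<psi> where "\<psi> = (\<lambda>y. max (1 + (- 1 / e) * \<bar>f y + (- f x)\<bar>) 0)"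
  have "\<psi> \<in> L"
    unfolding \<psi>_def by (intro max_closed add_closed scale_closed abs_closed const_closed S)
  moreover have "\<psi> y = 0" if "y \<notin> S" for y
  proof -
    have "e \<le> \<bar>f y - f x\<bar>"
      using that e S by (force simp: dist_real_def)
    then show ?thesis
      using e unfolding \<psi>_def by (simp add: field_simps)
  qed
  moreover have "\<forall>y. 0 \<le> \<psi> y \<and> \<psi> y \<le> 1" "\<psi> x = 1"
    using e unfolding \<psi>_def by auto
  ultimately show ?case
    unfolding bump_function_def by blast
qed

end

locale generating_lattice = function_lattice L
  for L :: "('a::topological_space \<Rightarrow> real) set" +
  assumes continuous: "f \<in> L \<Longrightarrow> continuous_on UNIV f"
    and generates: "(euclidean :: 'a topology) = topology_generated_by {f -` U | f U. f \<in> L \<and> open U}"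
    and second_countable: "second_countable (euclidean :: 'a topology)"
begin

lemma exists_bump:
  assumes "open W" "x \<in> W"
  shows "\<exists>\<psi>\<in>L. bump_function \<psi> W x"
proof -
  have "openin (topology_generated_by {f -` U | f U. f \<in> L \<and> open U}) W"
    using open_openin[THEN iffD1, OF assms(1)] unfolding generates .
  then show ?thesis
    using exists_bump_generated assms(2) by (simp add: openin_topology_generated_by_iff)
qed

lemma lsc_minorant_above:
  assumes "lsc F" "\<And>y. 0 \<le> F y" "t < F x"
  shows "\<exists>\<psi>\<in>minorants F. t < \<psi> x"
proof (cases "t < 0")
  case True
  have "(\<lambda>y. 0) \<in> minorants F"
    using assms(2) by (rule zero_in_minorants)
  with True show ?thesis
    by force
next
  case False
  define s where "s = (t + F x) / 2"
  have s: "t < s" "s < F x" "0 < s"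
    using assms(3) False unfolding s_def by auto
  have "open {y. s < F y}"
    using assms(1) unfolding lsc_def by blast
  moreover have "x \<in> {y. s < F y}"
    using s by simp
  ultimately obtain \<psi> where \<psi>: "\<psi> \<in> L" "bump_function \<psi> {y. s < F y} x"
    using exists_bump by blast
  have "0 \<le> s * \<psi> y \<and> s * \<psi> y \<le> F y" for y
  proof (cases "s < F y")
    case True
    have "s * \<psi> y \<le> s" "0 \<le> s * \<psi> y"
      using \<psi>(2) s mult_left_mono[of "\<psi> y" 1 s] unfolding bump_function_def by simp_all
    with True show ?thesis
      by linarith
  next
    case False
    then show ?thesis
      using \<psi>(2) assms(2)[of y] unfolding bump_function_def by simp
  qed
  moreover have "(\<lambda>y. s * \<psi> y) \<in> L"
    using \<psi>(1) by (rule scale_closed)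
  moreover have "t < s * \<psi> x"
    using \<psi>(2) s unfolding bump_function_def by simp
  ultimately show ?thesis
    unfolding minorants_def by (intro bexI[of _ "\<lambda>y. s * \<psi> y"]) auto
qed

lemma lsc_countable_minorants:
  assumes "lsc F" "\<And>y. 0 \<le> F y"
  obtains \<Phi> where "countable \<Phi>" "\<Phi> \<noteq> {}" "\<Phi> \<subseteq> minorants F"
    "\<And>x t. t < F x \<Longrightarrow> \<exists>\<phi>\<in>\<Phi>. t < \<phi> x"
proof -
  obtain \<B> :: "'a set set" where "countable \<B>"
    and \<B>: "\<forall>U x. openin euclidean U \<and> x \<in> U \<longrightarrow> (\<exists>V\<in>\<B>. x \<in> V \<and> V \<subseteq> U)"
    using second_countable unfolding second_countable_def by auto
  \<comment> \<open>For each basic open set V and rational q, one minorant that is at least q on V, if any.\<close>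
  define S where "S = {p \<in> \<B> \<times> \<rat>. \<exists>\<psi>\<in>minorants F. \<forall>y\<in>fst p. snd p \<le> \<psi> y}"
  have "\<forall>p\<in>S. \<exists>\<psi>. \<psi> \<in> minorants F \<and> (\<forall>y\<in>fst p. snd p \<le> \<psi> y)"
    unfolding S_def by blast
  then obtain g where g: "\<forall>p\<in>S. g p \<in> minorants F \<and> (\<forall>y\<in>fst p. snd p \<le> g p y)"
    by (rule bchoice[THEN exE])
  define \<Phi> where "\<Phi> = insert (\<lambda>y. 0) (g ` S)"
  have "countable (\<B> \<times> \<rat>)"
    using \<open>countable \<B>\<close> countable_rat by (intro countable_SIGMA)
  then have "countable S"
    unfolding S_def by (rule countable_subset[rotated]) blast
  then have countable: "countable \<Phi>"
    unfolding \<Phi>_def by simp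
  have minorants: "\<Phi> \<subseteq> minorants F"
    unfolding \<Phi>_def using g zero_in_minorants[of F] assms(2) by auto
  have dense: "\<exists>\<phi>\<in>\<Phi>. t < \<phi> x" if t: "t < F x" for x t
  proof -
    obtain \<psi> where \<psi>: "\<psi> \<in> minorants F" "t < \<psi> x"
      using lsc_minorant_above[OF assms t] by blast
    obtain q where q: "q \<in> \<rat>" "t < q" "q < \<psi> x"
      using Rats_dense_in_real \<psi>(2) by blast
    have "continuous_on UNIV \<psi>"
      using \<psi>(1) continuous unfolding minorants_def by blast
    then have "openin euclidean {y. q < \<psi> y}"
      unfolding open_openin[symmetric] by (intro open_Collect_less continuous_on_const)
    moreover have "x \<in> {y. q < \<psi> y}"
      using q(3) by simp
    ultimately obtain V where V: "V \<in> \<B>" "x \<in> V" "V \<subseteq> {y. q < \<psi> y}"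
      using \<B> by meson
    have "\<forall>y\<in>V. q \<le> \<psi> y"
      using V(3) by auto
    then have "(V, q) \<in> S"
      unfolding S_def using V(1) \<psi>(1) q(1) by auto
    then have "g (V, q) \<in> \<Phi>" "q \<le> g (V, q) x"
      unfolding \<Phi>_def using g V(2) by auto
    with q(2) show ?thesis
      by (intro bexI[of _ "g (V, q)"]) auto
  qed
  show ?thesis
    by (rule that[OF countable _ minorants dense]) (simp add: \<Phi>_def)
qed

lemma lsc_increasing_minorants:
  assumes "lsc F" "\<And>y. 0 \<le> F y"
  obtains a where "\<And>n. a n \<in> minorants F" "\<And>n y. a n y \<le> a (Suc n) y"
    "\<And>y. (\<lambda>n. a n y) \<longlonglongrightarrow> F y"
proof -
  obtain \<Phi> where \<Phi>: "countable \<Phi>" "\<Phi> \<noteq> {}" "\<Phi> \<subseteq> minorants F"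
    "\<And>x t. t < F x \<Longrightarrow> \<exists>\<phi>\<in>\<Phi>. t < \<phi> x"
    using lsc_countable_minorants[OF assms] by blast
  define e where "e = from_nat_into \<Phi>"
  have range_e: "range e = \<Phi>"
    unfolding e_def using \<Phi>(2,1) by (rule range_from_nat_into)
  define a where "a = running_max e"
  have a_minorant: "a n \<in> minorants F" for n
    unfolding a_def
  proof (rule running_max_closed)
    show "e k \<in> minorants F" for k
      using range_e \<Phi>(3) by blast
  qed (rule max_in_minorants)
  have a_incseq: "a n y \<le> a (Suc n) y" for n y
    unfolding a_def by simp
  have a_lim: "(\<lambda>n. a n y) \<longlonglongrightarrow> F y" for y
  proof (rule order_tendstoI)
    fix u
    assume "u > F y"
    moreover have "a n y \<le> F y" for n
      using a_minorant by (simp add: minorants_def)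
    ultimately show "eventually (\<lambda>n. a n y < u) sequentially"
      by (intro always_eventually allI) (rule le_less_trans)
  next
    fix t
    assume "t < F y"
    then obtain \<phi> where "\<phi> \<in> \<Phi>" "t < \<phi> y"
      using \<Phi>(4) by blast
    then obtain k where "t < e k y"
      using range_e by (metis rangeE)
    then have "t < a n y" if "k \<le> n" for n
      unfolding a_def using running_max_ge[OF that] by (rule less_le_trans)
    then show "eventually (\<lambda>n. t < a n y) sequentially"
      unfolding eventually_sequentially by blast
  qed
  show ?thesis
    by (rule that[OF a_minorant a_incseq a_lim])
qed

end

section \<open>The extended capacity and the space \<open>L\<^sup>1(c)\<close>\<close>

locale L1_setting = generating_lattice L + sublinear_capacity L \<rho>1 c
  for L :: "('a::topological_space \<Rightarrow> real) set" and \<rho>1 c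
begin

abbreviation cl where "cl \<equiv> cap_lsc L c"
abbreviation ce where "ce \<equiv> cap_ext L c"
abbreviation L1 where "L1 \<equiv> L1_carrier L c"

lemma cap_lsc_eq: "cl F = (SUP \<phi>\<in>minorants F. ereal (c \<phi>))"
  unfolding cap_lsc_def minorants_def ..

lemma cap_lsc_upper: "\<phi> \<in> minorants F \<Longrightarrow> ereal (c \<phi>) \<le> cl F"
  unfolding cap_lsc_eq by (rule SUP_upper)

lemma cap_lsc_nonneg: "(\<And>x. 0 \<le> F x) \<Longrightarrow> 0 \<le> cl F"
  using cap_lsc_upper[OF zero_in_minorants] c_zero by (simp add: zero_ereal_def)

lemma cap_lsc_subadditive:
  assumes F: "lsc F" "\<And>x. 0 \<le> F x" "cl F \<le> ereal A"
    and G: "lsc G" "\<And>x. 0 \<le> G x" "cl G \<le> ereal B"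
  shows "cl (\<lambda>x. F x + G x) \<le> ereal (A + B)"
  unfolding cap_lsc_eq
proof (rule SUP_least)
  fix \<phi>
  assume "\<phi> \<in> minorants (\<lambda>x. F x + G x)"
  then have \<phi>: "\<phi> \<in> L" "\<And>x. 0 \<le> \<phi> x" "\<And>x. \<phi> x \<le> F x + G x"
    unfolding minorants_def by auto
  obtain a where a: "\<And>n. a n \<in> minorants F" "\<And>n y. a n y \<le> a (Suc n) y" "\<And>y. (\<lambda>n. a n y) \<longlonglongrightarrow> F y"
    using lsc_increasing_minorants[OF F(1,2)] by blast
  obtain b where b: "\<And>n. b n \<in> minorants G" "\<And>n y. b n y \<le> b (Suc n) y" "\<And>y. (\<lambda>n. b n y) \<longlonglongrightarrow> G y"
    using lsc_increasing_minorants[OF G(1,2)] by blast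
  have ab_L: "a n \<in> L" "b n \<in> L" for n
    using a(1) b(1) unfolding minorants_def by auto
  \<comment> \<open>The part of \<phi> not yet covered by a n + b n decreases to 0, so its capacity vanishes.\<close>
  define h where "h n x = \<phi> x - min (\<phi> x) (a n x + b n x)" for n x
  have h_L: "h n \<in> L" for n
    unfolding h_def using \<phi>(1) ab_L by (intro diff_closed min_closed add_closed)
  have "decr_to_zero h"
    unfolding decr_to_zero_def
  proof (intro conjI allI)
    fix n x
    show "h (Suc n) x \<le> h n x"
      unfolding h_def using add_mono[OF a(2)[of n x] b(2)[of n x]] by (auto simp: min_def)
  next
    fix x
    have "(\<lambda>n. h n x) \<longlonglongrightarrow> \<phi> x - min (\<phi> x) (F x + G x)"
      unfolding h_def using a(3) b(3) by (intro tendsto_intros)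
    then show "(\<lambda>n. h n x) \<longlonglongrightarrow> 0"
      using \<phi>(3)[of x] by simp
  qed
  then have INF_h: "(INF n. c (h n)) = 0"
    using c_INF_decreasing h_L by blast
  have bound: "c \<phi> - A - B \<le> c (h n)" for n
  proof -
    have "ereal (c (a n)) \<le> ereal A" "ereal (c (b n)) \<le> ereal B"
      using order_trans[OF cap_lsc_upper[OF a(1)] F(3)] order_trans[OF cap_lsc_upper[OF b(1)] G(3)] .
    then have "c (a n) \<le> A" "c (b n) \<le> B"
      by simp_all
    moreover have "c \<phi> \<le> c (\<lambda>x. min (\<phi> x) (a n x + b n x)) + c (h n)"
    proof -
      have "c \<phi> = c (\<lambda>x. min (\<phi> x) (a n x + b n x) + h n x)"
        by (simp add: h_def)
      also have "\<dots> \<le> c (\<lambda>x. min (\<phi> x) (a n x + b n x)) + c (h n)"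
        using \<phi>(1) ab_L h_L by (intro c_subadditive min_closed add_closed)
      finally show ?thesis .
    qed
    moreover have "c (\<lambda>x. min (\<phi> x) (a n x + b n x)) \<le> c (a n) + c (b n)"
    proof -
      have "c (\<lambda>x. min (\<phi> x) (a n x + b n x)) \<le> c (\<lambda>x. a n x + b n x)"
        using \<phi> ab_L a(1) b(1) unfolding minorants_def
        by (intro c_mono min_closed add_closed) auto
      also have "\<dots> \<le> c (a n) + c (b n)"
        using ab_L by (rule c_subadditive)
      finally show ?thesis .
    qed
    ultimately show ?thesis
      by linarith
  qed
  have "c \<phi> - A - B \<le> (INF n. c (h n))"
    by (rule cINF_greatest) (simp_all add: bound)
  then have "c \<phi> - A - B \<le> 0"
    unfolding INF_h .
  then show "ereal (c \<phi>) \<le> ereal (A + B)"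
    by simp
qed

lemma cap_lsc_scale:
  assumes "r > 0" "cl F \<le> ereal A"
  shows "cl (\<lambda>x. r * F x) \<le> ereal (r * A)"
  unfolding cap_lsc_eq
proof (rule SUP_least)
  fix \<phi>
  assume "\<phi> \<in> minorants (\<lambda>x. r * F x)"
  then have "(\<lambda>x. (1 / r) * \<phi> x) \<in> minorants F"
    using assms(1) scale_closed[of \<phi> "1 / r"] unfolding minorants_def by (auto simp: field_simps)
  then have "ereal (c (\<lambda>x. (1 / r) * \<phi> x)) \<le> ereal A"
    by (rule order_trans[OF cap_lsc_upper assms(2)])
  then have "c (\<lambda>x. (1 / r) * \<phi> x) \<le> A"
    by simp
  moreover have "c \<phi> = r * c (\<lambda>x. (1 / r) * \<phi> x)"
    using c_scale[of \<phi> "1 / r"] \<open>\<phi> \<in> minorants _\<close> assms(1) unfolding minorants_def by simp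
  ultimately show "ereal (c \<phi>) \<le> ereal (r * A)"
    using assms(1) by simp
qed

lemma cap_ext_lessE:
  assumes "ce u < ereal e"
  obtains F A where "lsc F" "\<And>x. \<bar>u x\<bar> \<le> F x" "cl F = ereal A" "A < e"
proof -
  obtain F where F: "lsc F" "\<And>x. \<bar>u x\<bar> \<le> F x" "cl F < ereal e"
    using assms unfolding cap_ext_def INF_less_iff by auto
  have "0 \<le> cl F"
    using cap_lsc_nonneg F(2) by (meson abs_ge_zero order_trans)
  with F(3) obtain A where "cl F = ereal A" "A < e"
    by (cases "cl F") auto
  with F that show ?thesis
    by blast
qed

lemma cap_ext_le_cap_lsc: "lsc F \<Longrightarrow> (\<And>x. \<bar>u x\<bar> \<le> F x) \<Longrightarrow> ce u \<le> cl F"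
  unfolding cap_ext_def by (rule INF_lower) auto

lemma cap_ext_add_less:
  assumes "ce u < ereal e" "ce v < ereal e'"
  shows "ce (\<lambda>x. u x + v x) < ereal (e + e')"
proof -
  obtain F A where F: "lsc F" "\<And>x. \<bar>u x\<bar> \<le> F x" "cl F = ereal A" "A < e"
    using cap_ext_lessE[OF assms(1)] by blast
  obtain G B where G: "lsc G" "\<And>x. \<bar>v x\<bar> \<le> G x" "cl G = ereal B" "B < e'"
    using cap_ext_lessE[OF assms(2)] by blast
  have "ce (\<lambda>x. u x + v x) \<le> cl (\<lambda>x. F x + G x)"
    using F(2) G(2) by (intro cap_ext_le_cap_lsc lsc_add F(1) G(1) order_trans[OF abs_triangle_ineq add_mono])
  also have "\<dots> \<le> ereal (A + B)"
    using F G by (intro cap_lsc_subadditive) (auto intro: order_trans[OF abs_ge_zero])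
  also have "\<dots> < ereal (e + e')"
    using F(4) G(4) by simp
  finally show ?thesis .
qed

lemma cap_ext_scale_less:
  assumes "ce u < ereal e"
  shows "ce (\<lambda>x. a * u x) < ereal ((\<bar>a\<bar> + 1) * e)"
proof -
  obtain F A where F: "lsc F" "\<And>x. \<bar>u x\<bar> \<le> F x" "cl F = ereal A" "A < e"
    using cap_ext_lessE[OF assms] by blast
  define r where "r = \<bar>a\<bar> + 1"
  have r: "r > 0" "\<bar>a\<bar> \<le> r"
    unfolding r_def by auto
  have "\<bar>a * u x\<bar> \<le> r * F x" for x
    unfolding abs_mult using r F(2)[of x] by (intro mult_mono) auto
  then have "ce (\<lambda>x. a * u x) \<le> cl (\<lambda>x. r * F x)"
    using lsc_scale[OF F(1) r(1)] by (intro cap_ext_le_cap_lsc)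
  also have "\<dots> \<le> ereal (r * A)"
    using cap_lsc_scale[OF r(1)] F(3) by simp
  also have "\<dots> < ereal (r * e)"
    using F(4) r(1) by simp
  finally show ?thesis
    unfolding r_def .
qed

lemma cap_ext_mono: "(\<And>x. \<bar>u x\<bar> \<le> \<bar>v x\<bar>) \<Longrightarrow> ce u \<le> ce v"
  unfolding cap_ext_def by (rule INF_superset_mono) (auto intro: order_trans)

lemma cap_ext_diff_commute: "ce (\<lambda>x. u x - v x) = ce (\<lambda>x. v x - u x)"
  by (intro antisym cap_ext_mono) (simp_all add: abs_minus_commute)

lemma cap_ext_eq_c:
  assumes "f \<in> L"
  shows "ce f = ereal (c f)"
proof (rule antisym)
  have "ce f \<le> cl (\<lambda>x. \<bar>f x\<bar>)"
    using assms continuous by (intro cap_ext_le_cap_lsc lsc_abs_continuous) auto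
  also have "\<dots> \<le> ereal (c f)"
    unfolding cap_lsc_eq minorants_def using assms by (intro SUP_least) (auto intro!: c_mono)
  finally show "ce f \<le> ereal (c f)" .
next
  show "ereal (c f) \<le> ce f"
    unfolding cap_ext_def
  proof (rule INF_greatest)
    fix F
    assume "F \<in> {F. lsc F \<and> (\<forall>x. \<bar>f x\<bar> \<le> F x)}"
    then have "(\<lambda>x. \<bar>f x\<bar>) \<in> minorants F"
      using assms unfolding minorants_def by (auto intro: abs_closed)
    then show "ereal (c f) \<le> cl F"
      using cap_lsc_upper[of "\<lambda>x. \<bar>f x\<bar>" F] by (simp add: c_abs)
  qed
qed

lemma cap_ext_zero: "ce (\<lambda>x. 0) = 0"
  using cap_ext_eq_c[OF const_closed] c_zero by (simp add: zero_ereal_def)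

lemma cap_ext_triangle_less:
  assumes "ce (\<lambda>x. g x - f x) < ereal e" "ce (\<lambda>x. g x - h x) < ereal e'"
  shows "ce (\<lambda>x. h x - f x) < ereal (e' + e)"
proof -
  have "ce (\<lambda>x. h x - g x) < ereal e'"
    using assms(2) by (simp add: cap_ext_diff_commute[of h g])
  then have "ce (\<lambda>x. (h x - g x) + (g x - f x)) < ereal (e' + e)"
    using assms(1) by (rule cap_ext_add_less)
  then show ?thesis
    by simp
qed

lemma L1_approx: "g \<in> L1 \<Longrightarrow> e > 0 \<Longrightarrow> \<exists>f\<in>L. ce (\<lambda>x. g x - f x) < ereal e"
  unfolding L1_carrier_def by blast

lemma L1_intro:
  assumes "\<And>e. e > 0 \<Longrightarrow> \<exists>f\<in>L. ce (\<lambda>x. g x - f x) < ereal e"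
  shows "g \<in> L1"
proof -
  obtain f where f: "f \<in> L" "ce (\<lambda>x. g x - f x) < ereal 1"
    using assms[of 1] by auto
  have "ce f < ereal (c f + 1)"
    using cap_ext_eq_c[OF f(1)] by simp
  then have "ce (\<lambda>x. (g x - f x) + f x) < ereal (1 + (c f + 1))"
    using cap_ext_add_less[OF f(2)] by blast
  then have "ce g < \<infinity>"
    using less_trans by fastforce
  with assms show ?thesis
    unfolding L1_carrier_def by blast
qed

lemma L_subset_L1: "f \<in> L \<Longrightarrow> f \<in> L1"
  by (rule L1_intro) (auto intro!: bexI[of _ f] simp: cap_ext_zero zero_ereal_def)

lemma L1_add:
  assumes "g \<in> L1" "h \<in> L1"
  shows "(\<lambda>x. g x + h x) \<in> L1"
proof (rule L1_intro)
  fix e :: real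
  assume "e > 0"
  then obtain f k where "f \<in> L" "ce (\<lambda>x. g x - f x) < ereal (e / 2)"
    and "k \<in> L" "ce (\<lambda>x. h x - k x) < ereal (e / 2)"
    using L1_approx[OF assms(1)] L1_approx[OF assms(2)] by (meson half_gt_zero)
  moreover have "(\<lambda>x. (g x - f x) + (h x - k x)) = (\<lambda>x. (g x + h x) - (f x + k x))"
    by (auto simp: fun_eq_iff)
  ultimately show "\<exists>f\<in>L. ce (\<lambda>x. g x + h x - f x) < ereal e"
    using cap_ext_add_less[of "\<lambda>x. g x - f x" "e / 2" "\<lambda>x. h x - k x" "e / 2"]
    by (intro bexI[of _ "\<lambda>x. f x + k x"] add_closed) auto
qed

lemma L1_scale:
  assumes "g \<in> L1"
  shows "(\<lambda>x. a * g x) \<in> L1"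
proof (rule L1_intro)
  fix e :: real
  assume "e > 0"
  define e' where "e' = e / (\<bar>a\<bar> + 1)"
  have "e' > 0" "(\<bar>a\<bar> + 1) * e' = e"
    unfolding e'_def using \<open>e > 0\<close> by (auto simp: field_simps)
  then obtain f where "f \<in> L" "ce (\<lambda>x. g x - f x) < ereal e'"
    using L1_approx[OF assms] by blast
  moreover have "(\<lambda>x. a * (g x - f x)) = (\<lambda>x. a * g x - a * f x)"
    by (auto simp: fun_eq_iff algebra_simps)
  ultimately show "\<exists>f\<in>L. ce (\<lambda>x. a * g x - f x) < ereal e"
    using cap_ext_scale_less[of "\<lambda>x. g x - f x" e' a] \<open>(\<bar>a\<bar> + 1) * e' = e\<close>
    by (intro bexI[of _ "\<lambda>x. a * f x"] scale_closed) auto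
qed

lemma L1_add_const: "g \<in> L1 \<Longrightarrow> (\<lambda>x. g x + a) \<in> L1"
  using L1_add[of g "\<lambda>x. a"] L_subset_L1[OF const_closed] by simp

end

section \<open>Extension of Lipschitz functionals\<close>

definition L1_approx_seq ::
  "('a::topological_space \<Rightarrow> real) set \<Rightarrow> (('a \<Rightarrow> real) \<Rightarrow> real) \<Rightarrow> ('a \<Rightarrow> real) \<Rightarrow> nat \<Rightarrow> 'a \<Rightarrow> real" where
  "L1_approx_seq L c g n = (SOME f. f \<in> L \<and> cap_ext L c (\<lambda>x. g x - f x) < ereal (1 / real (Suc n)))"

definition L1_extension ::
  "('a::topological_space \<Rightarrow> real) set \<Rightarrow> (('a \<Rightarrow> real) \<Rightarrow> real) \<Rightarrow> (('a \<Rightarrow> real) \<Rightarrow> real) \<Rightarrow> ('a \<Rightarrow> real) \<Rightarrow> real" where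
  "L1_extension L c P g = lim (\<lambda>n. P (L1_approx_seq L c g n))"

locale lipschitz_extension = L1_setting L \<rho>1 c
  for L :: "('a::topological_space \<Rightarrow> real) set" and \<rho>1 c +
  fixes P :: "('a \<Rightarrow> real) \<Rightarrow> real"
  assumes P_lipschitz: "X \<in> L \<Longrightarrow> Y \<in> L \<Longrightarrow> \<bar>P X - P Y\<bar> \<le> c (\<lambda>x. X x - Y x)"
begin

abbreviation E where "E \<equiv> L1_extension L c P"

lemma P_close:
  assumes "X \<in> L" "Y \<in> L" "ce (\<lambda>x. X x - Y x) < ereal e"
  shows "\<bar>P X - P Y\<bar> < e"
  using P_lipschitz[OF assms(1,2)] assms(3) cap_ext_eq_c[OF diff_closed[OF assms(1,2)]] by simp

lemma L1_approx_seq: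
  assumes "g \<in> L1"
  shows "L1_approx_seq L c g n \<in> L"
    and "ce (\<lambda>x. g x - L1_approx_seq L c g n x) < ereal (1 / real (Suc n))"
proof -
  have "\<exists>f. f \<in> L \<and> ce (\<lambda>x. g x - f x) < ereal (1 / real (Suc n))"
    using L1_approx[OF assms, of "1 / real (Suc n)"] by auto
  then have "L1_approx_seq L c g n \<in> L \<and> ce (\<lambda>x. g x - L1_approx_seq L c g n x) < ereal (1 / real (Suc n))"
    unfolding L1_approx_seq_def by (rule someI_ex)
  then show "L1_approx_seq L c g n \<in> L"
    and "ce (\<lambda>x. g x - L1_approx_seq L c g n x) < ereal (1 / real (Suc n))"
    by auto
qed

lemma L1_approx_seq_close:
  assumes "g \<in> L1" "f \<in> L" "ce (\<lambda>x. g x - f x) < ereal e"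
  shows "\<bar>P (L1_approx_seq L c g n) - P f\<bar> < 1 / real (Suc n) + e"
  using L1_approx_seq[OF assms(1)] assms(2,3) by (intro P_close cap_ext_triangle_less)

lemma extension_LIMSEQ:
  assumes "g \<in> L1"
  shows "(\<lambda>n. P (L1_approx_seq L c g n)) \<longlonglongrightarrow> E g"
proof -
  have "Cauchy (\<lambda>n. P (L1_approx_seq L c g n))"
  proof (rule metric_CauchyI)
    fix e :: real
    assume "e > 0"
    obtain N :: nat where "2 / e < real N"
      using reals_Archimedean2 by blast
    with \<open>e > 0\<close> have "2 < e * real N"
      by (simp add: field_simps)
    then have "0 < e * real N"
      by linarith
    then have "real N > 0"
      using \<open>e > 0\<close> by (rule zero_less_mult_pos)
    with \<open>2 < e * real N\<close> have N: "real N > 0" "2 / real N < e"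
      by (simp_all add: pos_divide_less_eq)
    have "dist (P (L1_approx_seq L c g m)) (P (L1_approx_seq L c g n)) < e"
      if "N \<le> m" "N \<le> n" for m n
    proof -
      have "1 / real (Suc m) \<le> 1 / real N" "1 / real (Suc n) \<le> 1 / real N"
        using that N(1) by (auto intro!: divide_left_mono)
      moreover have "\<bar>P (L1_approx_seq L c g m) - P (L1_approx_seq L c g n)\<bar>
          < 1 / real (Suc m) + 1 / real (Suc n)"
        by (rule L1_approx_seq_close[OF assms L1_approx_seq[OF assms]])
      ultimately show ?thesis
        using N(2) unfolding dist_real_def by simp
    qed
    then show "\<exists>M. \<forall>m\<ge>M. \<forall>n\<ge>M. dist (P (L1_approx_seq L c g m)) (P (L1_approx_seq L c g n)) < e"
      by blast
  qed
  then show ?thesis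
    unfolding L1_extension_def by (simp add: Cauchy_convergent_iff convergent_LIMSEQ_iff)
qed

lemma extension_close:
  assumes "g \<in> L1" "f \<in> L" "ce (\<lambda>x. g x - f x) < ereal e"
  shows "\<bar>E g - P f\<bar> \<le> e"
proof (rule LIMSEQ_le)
  show "(\<lambda>n. \<bar>P (L1_approx_seq L c g n) - P f\<bar>) \<longlonglongrightarrow> \<bar>E g - P f\<bar>"
    using extension_LIMSEQ[OF assms(1)] by (intro tendsto_intros)
  show "(\<lambda>n. 1 / real (Suc n) + e) \<longlonglongrightarrow> e"
    using tendsto_add[OF LIMSEQ_inverse_real_of_nat tendsto_const[of e]] by (simp add: inverse_eq_divide)
  show "\<exists>N. \<forall>n\<ge>N. \<bar>P (L1_approx_seq L c g n) - P f\<bar> \<le> 1 / real (Suc n) + e"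
    by (intro exI[of _ 0] allI impI less_imp_le L1_approx_seq_close[OF assms])
qed

lemma extension_eq:
  assumes "f \<in> L"
  shows "E f = P f"
  using extension_close[OF L_subset_L1[OF assms] assms]
  by (intro eq_if_abs_diff_le_epsilon) (simp add: cap_ext_zero zero_ereal_def)

lemma extension_approx:
  assumes "g \<in> L1" "e > 0"
  obtains f where "f \<in> L" "ce (\<lambda>x. g x - f x) < ereal e" "\<bar>E g - P f\<bar> \<le> e"
  using L1_approx[OF assms] extension_close[OF assms(1)] by blast

lemma extension_lipschitz:
  assumes "g \<in> L1" "h \<in> L1" "ce (\<lambda>x. h x - g x) < ereal d"
  shows "\<bar>E h - E g\<bar> \<le> d"
proof (rule field_le_epsilon)
  fix e :: real
  assume "e > 0"
  then obtain f where f: "f \<in> L" "ce (\<lambda>x. g x - f x) < ereal (e / 2)" "\<bar>E g - P f\<bar> \<le> e / 2"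
    using extension_approx[OF assms(1)] half_gt_zero by blast
  have "ce (\<lambda>x. (h x - g x) + (g x - f x)) < ereal (d + e / 2)"
    using cap_ext_add_less[OF assms(3) f(2)] .
  then have "\<bar>E h - P f\<bar> \<le> d + e / 2"
    using extension_close[OF assms(2) f(1)] by simp
  with f(3) show "\<bar>E h - E g\<bar> \<le> d + e"
    by linarith
qed

lemma extension_continuous: "L1_continuous L c E"
  unfolding L1_continuous_def
proof (intro ballI allI impI)
  fix g and e :: real
  assume "g \<in> L1" "e > 0"
  then have "\<forall>h\<in>L1. ce (\<lambda>x. h x - g x) < ereal (e / 2) \<longrightarrow> \<bar>E h - E g\<bar> < e"
    using extension_lipschitz[of g] by fastforce
  then show "\<exists>d>0. \<forall>h\<in>L1. ce (\<lambda>x. h x - g x) < ereal d \<longrightarrow> \<bar>E h - E g\<bar> < e"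
    using \<open>e > 0\<close> half_gt_zero by blast
qed

lemma extension_unique:
  assumes "\<forall>X\<in>L. R X = P X" "L1_continuous L c R" "g \<in> L1"
  shows "R g = E g"
proof (rule eq_if_abs_diff_le_epsilon)
  fix e :: real
  assume "e > 0"
  then obtain d where d: "d > 0" "\<forall>h\<in>L1. ce (\<lambda>x. h x - g x) < ereal d \<longrightarrow> \<bar>R h - R g\<bar> < e / 2"
    using assms(2,3) half_gt_zero unfolding L1_continuous_def by blast
  obtain f where f: "f \<in> L" "ce (\<lambda>x. g x - f x) < ereal (min d (e / 2))" "\<bar>E g - P f\<bar> \<le> min d (e / 2)"
    using extension_approx[OF assms(3), of "min d (e / 2)"] d(1) \<open>e > 0\<close> by auto
  have "ce (\<lambda>x. f x - g x) < ereal d"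
    using f(2) cap_ext_diff_commute[of f g] by (simp add: less_le_trans)
  then have "\<bar>R f - R g\<bar> < e / 2"
    using d(2) L_subset_L1[OF f(1)] by blast
  moreover have "R f = P f"
    using assms(1) f(1) by blast
  moreover have "\<bar>E g - P f\<bar> \<le> e / 2"
    using f(3) by simp
  ultimately show "\<bar>R g - E g\<bar> \<le> e"
    unfolding abs_le_iff abs_less_iff by linarith
qed

end

context lipschitz_extension
begin

lemma extension_monotone:
  assumes "monotone_rm L pw_nonneg P"
  shows "monotone_rm L1 (L1_nonneg L c) E"
  unfolding monotone_rm_def
proof (intro ballI impI)
  fix X Y
  assume X: "X \<in> L1" and Y: "Y \<in> L1" and "L1_nonneg L c (\<lambda>x. Y x - X x)"
  then obtain fs where fs: "\<And>n. fs n \<in> L" "\<And>n. pw_nonneg (fs n)"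
    and fs_lim: "(\<lambda>n. ce (\<lambda>x. (Y x - X x) - fs n x)) \<longlonglongrightarrow> 0"
    unfolding L1_nonneg_def by blast
  \<comment> \<open>Y is close to f + fs n with f close to X, and P (f + fs n) \<le> P f.\<close>
  show "E Y \<le> E X"
  proof (rule field_le_epsilon)
    fix e :: real
    assume "e > 0"
    then have "eventually (\<lambda>n. ce (\<lambda>x. (Y x - X x) - fs n x) < ereal (e / 3)) sequentially"
      using fs_lim by (intro order_tendstoD(2)) (auto simp: zero_ereal_def)
    then obtain n where n: "ce (\<lambda>x. (Y x - X x) - fs n x) < ereal (e / 3)"
      by (auto simp: eventually_sequentially)
    obtain f where f: "f \<in> L" "ce (\<lambda>x. X x - f x) < ereal (e / 3)" "\<bar>E X - P f\<bar> \<le> e / 3"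
      using extension_approx[OF X] \<open>e > 0\<close> by (metis zero_less_divide_iff zero_less_numeral)
    have f_fs: "(\<lambda>x. f x + fs n x) \<in> L"
      using f(1) fs(1) by (rule add_closed)
    have "(\<lambda>x. ((Y x - X x) - fs n x) + (X x - f x)) = (\<lambda>x. Y x - (f x + fs n x))"
      by (auto simp: fun_eq_iff)
    then have "ce (\<lambda>x. Y x - (f x + fs n x)) < ereal (e / 3 + e / 3)"
      using cap_ext_add_less[OF n f(2)] by simp
    then have "\<bar>E Y - P (\<lambda>x. f x + fs n x)\<bar> \<le> e / 3 + e / 3"
      by (rule extension_close[OF Y f_fs])
    moreover have "P (\<lambda>x. f x + fs n x) \<le> P f"
      using assms f(1) f_fs fs(2) unfolding monotone_rm_def pw_nonneg_def by auto
    ultimately show "E Y \<le> E X + e"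
      using f(3) by linarith
  qed
qed

lemma extension_transl_inv:
  assumes "transl_inv L P"
  shows "transl_inv L1 E"
  unfolding transl_inv_def
proof (intro ballI allI)
  fix X a
  assume X: "X \<in> L1"
  show "E (\<lambda>x. X x + a) = E X - a"
  proof (rule eq_if_abs_diff_le_epsilon)
    fix e :: real
    assume "e > 0"
    then obtain f where f: "f \<in> L" "ce (\<lambda>x. X x - f x) < ereal (e / 2)" "\<bar>E X - P f\<bar> \<le> e / 2"
      using extension_approx[OF X] half_gt_zero by blast
    have "ce (\<lambda>x. (X x + a) - (f x + a)) < ereal (e / 2)"
      using f(2) by simp
    then have "\<bar>E (\<lambda>x. X x + a) - P (\<lambda>x. f x + a)\<bar> \<le> e / 2"
      using extension_close[OF L1_add_const[OF X] add_const_closed[OF f(1)]] by blast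
    moreover have "P (\<lambda>x. f x + a) = P f - a"
      using assms f(1) unfolding transl_inv_def by blast
    ultimately show "\<bar>E (\<lambda>x. X x + a) - (E X - a)\<bar> \<le> e"
      using f(3) unfolding abs_le_iff by linarith
  qed
qed

lemma extension_pos_homogeneous:
  assumes "pos_homogeneous L P"
  shows "pos_homogeneous L1 E"
  unfolding pos_homogeneous_def
proof (intro ballI allI impI)
  fix X and t :: real
  assume X: "X \<in> L1" and "t > 0"
  show "E (\<lambda>x. t * X x) = t * E X"
  proof (rule eq_if_abs_diff_le_epsilon)
    fix e :: real
    assume "e > 0"
    define e' where "e' = e / (2 * t + 1)"
    have e': "e' > 0" "(2 * t + 1) * e' = e"
      unfolding e'_def using \<open>e > 0\<close> \<open>t > 0\<close> by (auto simp: field_simps)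
    obtain f where f: "f \<in> L" "ce (\<lambda>x. X x - f x) < ereal e'" "\<bar>E X - P f\<bar> \<le> e'"
      using extension_approx[OF X e'(1)] by blast
    have "ce (\<lambda>x. t * (X x - f x)) < ereal ((\<bar>t\<bar> + 1) * e')"
      using f(2) by (rule cap_ext_scale_less)
    then have "ce (\<lambda>x. t * X x - t * f x) < ereal ((t + 1) * e')"
      using \<open>t > 0\<close> by (simp add: algebra_simps)
    then have "\<bar>E (\<lambda>x. t * X x) - P (\<lambda>x. t * f x)\<bar> \<le> (t + 1) * e'"
      using extension_close[OF L1_scale[OF X] scale_closed[OF f(1)]] by blast
    moreover have "P (\<lambda>x. t * f x) = t * P f"
      using pos_homogeneousD[OF assms f(1) \<open>t > 0\<close>] .
    moreover have "\<bar>t * E X - t * P f\<bar> \<le> t * e'"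
      using f(3) \<open>t > 0\<close> by (simp add: abs_mult flip: right_diff_distrib)
    ultimately have "\<bar>E (\<lambda>x. t * X x) - t * E X\<bar> \<le> (t + 1) * e' + t * e'"
      unfolding abs_le_iff by linarith
    with e'(2) show "\<bar>E (\<lambda>x. t * X x) - t * E X\<bar> \<le> e"
      by (simp add: algebra_simps)
  qed
qed

lemma extension_convex:
  assumes "convex_rm L P"
  shows "convex_rm L1 E"
  unfolding convex_rm_def
proof (intro ballI allI impI)
  fix X Y and t :: real
  assume X: "X \<in> L1" and Y: "Y \<in> L1" and t: "0 \<le> t \<and> t \<le> 1"
  let ?Z = "\<lambda>x. t * X x + (1 - t) * Y x"
  show "E ?Z \<le> t * E X + (1 - t) * E Y"
  proof (rule field_le_epsilon)
    fix e :: real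
    assume "e > 0"
    then have "e / 4 > 0"
      by simp
    obtain f where f: "f \<in> L" "ce (\<lambda>x. X x - f x) < ereal (e / 4)" "\<bar>E X - P f\<bar> \<le> e / 4"
      using extension_approx[OF X \<open>e / 4 > 0\<close>] by blast
    obtain k where k: "k \<in> L" "ce (\<lambda>x. Y x - k x) < ereal (e / 4)" "\<bar>E Y - P k\<bar> \<le> e / 4"
      using extension_approx[OF Y \<open>e / 4 > 0\<close>] by blast
    have bound: "ce (\<lambda>x. t * (X x - f x) + (1 - t) * (Y x - k x))
        < ereal ((\<bar>t\<bar> + 1) * (e / 4) + (\<bar>1 - t\<bar> + 1) * (e / 4))"
      using cap_ext_scale_less[OF f(2)] cap_ext_scale_less[OF k(2)] by (rule cap_ext_add_less)
    have fun_eq: "(\<lambda>x. t * (X x - f x) + (1 - t) * (Y x - k x))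
        = (\<lambda>x. ?Z x - (t * f x + (1 - t) * k x))"
      by (auto simp: fun_eq_iff algebra_simps)
    have sum_eq: "(\<bar>t\<bar> + 1) * (e / 4) + (\<bar>1 - t\<bar> + 1) * (e / 4) = 3 * (e / 4)"
      using t by (simp only: distrib_right[symmetric]) simp
    have "ce (\<lambda>x. ?Z x - (t * f x + (1 - t) * k x)) < ereal (3 * (e / 4))"
      using bound unfolding fun_eq sum_eq .
    then have "\<bar>E ?Z - P (\<lambda>x. t * f x + (1 - t) * k x)\<bar> \<le> 3 * (e / 4)"
      by (rule extension_close[OF L1_add[OF L1_scale[OF X] L1_scale[OF Y]]
            add_closed[OF scale_closed[OF f(1)] scale_closed[OF k(1)]]])
    then have "E ?Z \<le> P (\<lambda>x. t * f x + (1 - t) * k x) + 3 * (e / 4)"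
      unfolding abs_le_iff by linarith
    also have "P (\<lambda>x. t * f x + (1 - t) * k x) \<le> t * P f + (1 - t) * P k"
      using convex_rmD[OF assms f(1) k(1)] t by blast
    also have "t * P f + (1 - t) * P k \<le> t * E X + (1 - t) * E Y + e / 4"
    proof -
      have "P f \<le> E X + e / 4" "P k \<le> E Y + e / 4"
        using f(3) k(3) unfolding abs_le_iff by linarith+
      then have "t * P f \<le> t * (E X + e / 4)" "(1 - t) * P k \<le> (1 - t) * (E Y + e / 4)"
        using t by (simp_all add: mult_left_mono)
      moreover have "t * (E X + e / 4) + (1 - t) * (E Y + e / 4) = t * E X + (1 - t) * E Y + e / 4"
        by (simp add: field_simps)
      ultimately show ?thesis
        by linarith
    qed
    finally show "E ?Z \<le> t * E X + (1 - t) * E Y + e"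
      by simp
  qed
qed

lemma extension_convex_risk_measure:
  "convex_risk_measure L pw_nonneg P \<Longrightarrow> convex_risk_measure L1 (L1_nonneg L c) E"
  unfolding convex_risk_measure_def
  using extension_monotone extension_convex extension_transl_inv by blast

lemma extension_sublinear_risk_measure:
  "sublinear_risk_measure L pw_nonneg P \<Longrightarrow> sublinear_risk_measure L1 (L1_nonneg L c) E"
  unfolding sublinear_risk_measure_def
  using extension_convex_risk_measure extension_pos_homogeneous by blast

end

lemma (in L1_setting) L1_extension_mono:
  assumes "lipschitz_extension L \<rho>1 c P" "lipschitz_extension L \<rho>1 c Q"
    and "\<And>X. X \<in> L \<Longrightarrow> P X \<le> Q X" and "g \<in> L1"
  shows "L1_extension L c P g \<le> L1_extension L c Q g"
proof (rule field_le_epsilon)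
  fix e :: real
  assume "e > 0"
  then obtain f where f: "f \<in> L" "ce (\<lambda>x. g x - f x) < ereal (e / 2)"
    using L1_approx[OF assms(4)] half_gt_zero by blast
  have "\<bar>L1_extension L c P g - P f\<bar> \<le> e / 2" "\<bar>L1_extension L c Q g - Q f\<bar> \<le> e / 2"
    using lipschitz_extension.extension_close[OF assms(1) assms(4) f]
      lipschitz_extension.extension_close[OF assms(2) assms(4) f] .
  with assms(3)[OF f(1)] show "L1_extension L c P g \<le> L1_extension L c Q g + e"
    unfolding abs_le_iff by linarith
qed

theorem lemma5p5:
  fixes L :: "('a::topological_space \<Rightarrow> real) set"
    and \<rho> \<rho>1 :: "('a \<Rightarrow> real) \<Rightarrow> real"
  assumes metr: "metrizable_space (euclidean :: 'a topology)"
    and sep: "separable_space (euclidean :: 'a topology)"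
    and Lcb: "\<forall>f\<in>L. bounded_cont f"
    and Ladd: "\<forall>f\<in>L. \<forall>g\<in>L. (\<lambda>x. f x + g x) \<in> L"
    and Lscal: "\<forall>f\<in>L. \<forall>a::real. (\<lambda>x. a * f x) \<in> L"
    and Lsup: "\<forall>f\<in>L. \<forall>g\<in>L. (\<lambda>x. max (f x) (g x)) \<in> L"
    and Lconst: "\<forall>a::real. const_fun a \<in> L"
    and Lgen: "(euclidean :: 'a topology) = topology_generated_by {f -` U | f U. f \<in> L \<and> open U}"
    and rho_crm: "convex_risk_measure L pw_nonneg \<rho>"
    and rho_norm: "\<rho> (const_fun 0) = 0"
    and rho_ur: "uniformly_regular L \<rho>"
    and rho1_sl: "sublinear_risk_measure L pw_nonneg \<rho>1"
    and rho1_reg: "regular_rm L \<rho>1"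
    and le: "\<forall>X\<in>L. \<rho> X \<le> \<rho>1 X"
  defines "c \<equiv> (\<lambda>X. \<rho>1 (\<lambda>x. - \<bar>X x\<bar>))"
  shows "capacity L c \<and>
    (\<exists>R1. (\<forall>X\<in>L. R1 X = \<rho>1 X) \<and> L1_continuous L c R1 \<and>
          sublinear_risk_measure (L1_carrier L c) (L1_nonneg L c) R1 \<and>
          (\<forall>R'. (\<forall>X\<in>L. R' X = \<rho>1 X) \<and> L1_continuous L c R' \<longrightarrow>
                (\<forall>g\<in>L1_carrier L c. R' g = R1 g)) \<and>
     (\<exists>R. (\<forall>X\<in>L. R X = \<rho> X) \<and> L1_continuous L c R \<and>
          convex_risk_measure (L1_carrier L c) (L1_nonneg L c) R \<and>
          R (const_fun 0) = 0 \<and>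
          (\<forall>g\<in>L1_carrier L c. R g \<le> R1 g) \<and>
          (\<forall>R'. (\<forall>X\<in>L. R' X = \<rho> X) \<and> L1_continuous L c R' \<longrightarrow>
                (\<forall>g\<in>L1_carrier L c. R' g = R g))))"
proof -
  interpret L1_setting L \<rho>1 c
    using Ladd Lscal Lsup Lconst Lcb Lgen rho1_sl rho1_reg
      metrizable_separable_imp_second_countable[OF metr sep]
    by unfold_locales (auto simp: c_def const_fun_def bounded_cont_def)
  have "convex_rm L \<rho>"
    using rho_crm unfolding convex_risk_measure_def by blast
  then interpret C: lipschitz_extension L \<rho>1 c \<rho>
    using le by unfold_locales (blast intro: convex_rm_lipschitz)
  interpret S: lipschitz_extension L \<rho>1 c \<rho>1
    by unfold_locales (rule \<rho>1_lipschitz)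
  have "\<forall>g\<in>L1. C.E g \<le> S.E g"
    using L1_extension_mono[OF C.lipschitz_extension_axioms S.lipschitz_extension_axioms] le by blast
  moreover have "C.E (const_fun 0) = 0"
    using C.extension_eq[of "const_fun 0"] Lconst rho_norm by simp
  ultimately show ?thesis
    using capacity_c S.extension_eq S.extension_continuous S.extension_unique
      S.extension_sublinear_risk_measure[OF rho1_sl] C.extension_eq C.extension_continuous
      C.extension_unique C.extension_convex_risk_measure[OF rho_crm]
    by (intro conjI exI[of _ S.E] exI[of _ C.E]) auto
qed

end
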